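(* For every $2+1$-complex $K\subset\mathbb{R}^3$, the set $Extr(K)$ of extremal points of $K$ is finite.
   Context: A horizontal segment is one contained in a plane $\{z=c\}$; a vertical segment is one parallel to the $z$ axis. A $2+1$-complex is a closed subset of $\mathbb{R}^3$ that is the union of a finite list $L$ of elements, each of one of the following kinds: points; relatively open horizontal segments whose two endpoints belong to $L$; relatively open vertical segments whose two endpoints belong to $L$; relatively open triangles in a horizontal plane whose three boundary segments belong to $L$; relatively open rectangles in a vertical plane, two of whose sides are parallel to the $z$ axis, whose four boundary segments belong to $L$; open subsets of $\mathbb{R}^3$ whose boundary is a union of elements of the previous kinds, all belonging to $L$. A point $p\in K$ is extremal if no relatively open horizontal or vertical segment contained in $K$ contains $p$. *)

theory Defs
  imports "HOL-Analysis.Analysis"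
begin

text \<open>Points of R^3 are vectors of type real^3; the z coordinate is component 3.\<close>

definition ez :: "real^3" where "ez = axis 3 1"

definition is_point_cell :: "(real^3) set \<Rightarrow> bool" where
  "is_point_cell S \<longleftrightarrow> (\<exists>p. S = {p})"

definition is_hseg_cell :: "(real^3) set set \<Rightarrow> (real^3) set \<Rightarrow> bool" where
  "is_hseg_cell L S \<longleftrightarrow> (\<exists>a b. a \<noteq> b \<and> a$3 = b$3 \<and> S = open_segment a b
      \<and> {a} \<in> L \<and> {b} \<in> L)"

definition is_vseg_cell :: "(real^3) set set \<Rightarrow> (real^3) set \<Rightarrow> bool" where
  "is_vseg_cell L S \<longleftrightarrow> (\<exists>a b. a \<noteq> b \<and> a$1 = b$1 \<and> a$2 = b$2 \<and> S = open_segment a b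
      \<and> {a} \<in> L \<and> {b} \<in> L)"

definition is_htri_cell :: "(real^3) set set \<Rightarrow> (real^3) set \<Rightarrow> bool" where
  "is_htri_cell L S \<longleftrightarrow> (\<exists>a b c. \<not> collinear {a, b, c} \<and> a$3 = b$3 \<and> b$3 = c$3
      \<and> S = rel_interior (convex hull {a, b, c})
      \<and> open_segment a b \<in> L \<and> open_segment b c \<in> L \<and> open_segment a c \<in> L)"

definition is_vrect_cell :: "(real^3) set set \<Rightarrow> (real^3) set \<Rightarrow> bool" where
  "is_vrect_cell L S \<longleftrightarrow> (\<exists>a b t. a \<noteq> b \<and> a$3 = b$3 \<and> t > 0
      \<and> S = rel_interior (convex hull {a, b, a + t *\<^sub>R ez, b + t *\<^sub>R ez})
      \<and> open_segment a b \<in> L \<and> open_segment (a + t *\<^sub>R ez) (b + t *\<^sub>R ez) \<in> L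
      \<and> open_segment a (a + t *\<^sub>R ez) \<in> L \<and> open_segment b (b + t *\<^sub>R ez) \<in> L)"

definition is_lowdim_cell :: "(real^3) set set \<Rightarrow> (real^3) set \<Rightarrow> bool" where
  "is_lowdim_cell L S \<longleftrightarrow> is_point_cell S \<or> is_hseg_cell L S \<or> is_vseg_cell L S
      \<or> is_htri_cell L S \<or> is_vrect_cell L S"

definition is_open_cell :: "(real^3) set set \<Rightarrow> (real^3) set \<Rightarrow> bool" where
  "is_open_cell L S \<longleftrightarrow> open S \<and>
      (\<exists>M \<subseteq> L. (\<forall>T\<in>M. is_lowdim_cell L T) \<and> frontier S = \<Union>M)"

definition complex21 :: "(real^3) set \<Rightarrow> bool" where
  "complex21 K \<longleftrightarrow> closed K \<and> (\<exists>L. finite L \<and> K = \<Union>L \<and>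
      (\<forall>S\<in>L. is_lowdim_cell L S \<or> is_open_cell L S))"

definition extremal :: "(real^3) set \<Rightarrow> real^3 \<Rightarrow> bool" where
  "extremal K p \<longleftrightarrow> p \<in> K \<and> \<not> (\<exists>a b. a \<noteq> b \<and> (a$3 = b$3 \<or> (a$1 = b$1 \<and> a$2 = b$2))
      \<and> open_segment a b \<subseteq> K \<and> p \<in> open_segment a b)"

definition Extr :: "(real^3) set \<Rightarrow> (real^3) set" where
  "Extr K = {p. extremal K p}"

end

theory Submission
  imports Defs
begin

text \<open>A cell of the list other than a point is relatively open in its affine hull, and that
  affine hull contains a horizontal or vertical direction: the segment itself, a horizontal
  edge of a triangle or rectangle, or the z axis for an open set. Hence a short horizontal or
  vertical segment through any point of such a cell stays inside the cell, and so inside K.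
  Every extremal point is therefore one of the finitely many point cells.\<close>

definition hv_direction :: "real^3 \<Rightarrow> bool" where
  "hv_direction d \<longleftrightarrow> d \<noteq> 0 \<and> (d$3 = 0 \<or> (d$1 = 0 \<and> d$2 = 0))"

lemma not_extremal_symmetric_segment:
  fixes p d :: "real^3"
  assumes "hv_direction d" "t > 0" "open_segment (p - t *\<^sub>R d) (p + t *\<^sub>R d) \<subseteq> K"
  shows "\<not> extremal K p"
proof -
  let ?a = "p - t *\<^sub>R d" and ?b = "p + t *\<^sub>R d"
  have "?b - ?a = (2 * t) *\<^sub>R d"
    by (simp add: vec_eq_iff)
  then have "?a \<noteq> ?b"
    using assms(1,2) by (auto simp: hv_direction_def)
  moreover have "p \<in> open_segment ?a ?b"
  proof -
    have "midpoint ?a ?b = p"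
      by (simp add: midpoint_def vec_eq_iff)
    then show ?thesis
      using \<open>?a \<noteq> ?b\<close> midpoint_in_open_segment by metis
  qed
  moreover have "?a$3 = ?b$3 \<or> (?a$1 = ?b$1 \<and> ?a$2 = ?b$2)"
    using assms(1) by (auto simp: hv_direction_def)
  ultimately show ?thesis
    using assms(3) unfolding extremal_def by blast
qed

lemma not_extremal_rel_interior:
  fixes p a b :: "real^3"
  assumes "p \<in> rel_interior C" "C \<subseteq> K" "a \<in> affine hull C" "b \<in> affine hull C"
    and "hv_direction (b - a)"
  shows "\<not> extremal K p"
proof -
  define d where "d = b - a"
  obtain e where "e > 0" and ball_C: "ball p e \<inter> affine hull C \<subseteq> C"
    using assms(1) mem_rel_interior_ball by blast
  have "d \<noteq> 0"
    using assms(5) by (simp add: d_def hv_direction_def)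
  define t where "t = e / (2 * norm d)"
  have "t > 0"
    using \<open>e > 0\<close> \<open>d \<noteq> 0\<close> by (simp add: t_def)
  have "norm (t *\<^sub>R d) = e / 2"
    using \<open>d \<noteq> 0\<close> \<open>e > 0\<close> by (simp add: t_def)
  then have "p + t *\<^sub>R d \<in> ball p e" "p - t *\<^sub>R d \<in> ball p e"
    using \<open>e > 0\<close> unfolding mem_ball dist_norm by simp_all
  moreover have "p \<in> affine hull C"
    by (rule hull_inc) (use assms(1) rel_interior_subset in blast)
  then have "p + t *\<^sub>R d \<in> affine hull C" "p - t *\<^sub>R d \<in> affine hull C"
    unfolding d_def
    by (rule mem_affine_3_minus[OF affine_affine_hull _ assms(4,3)],
        rule mem_affine_3_minus2[OF affine_affine_hull _ assms(4,3)])
  moreover have "convex (ball p e \<inter> affine hull C)"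
    by (intro convex_Int convex_ball affine_imp_convex affine_affine_hull)
  ultimately have "closed_segment (p - t *\<^sub>R d) (p + t *\<^sub>R d) \<subseteq> ball p e \<inter> affine hull C"
    by (intro closed_segment_subset) simp_all
  then have "open_segment (p - t *\<^sub>R d) (p + t *\<^sub>R d) \<subseteq> K"
    using segment_open_subset_closed ball_C assms(2) by blast
  moreover have "hv_direction d"
    using assms(5) by (simp add: d_def)
  ultimately show ?thesis
    using not_extremal_symmetric_segment \<open>t > 0\<close> by blast
qed

lemma not_extremal_rel_interior_convex_hull:
  fixes p a b :: "real^3"
  assumes "p \<in> rel_interior (convex hull V)" "rel_interior (convex hull V) \<subseteq> K"
    and "a \<in> V" "b \<in> V" "hv_direction (b - a)"
  shows "\<not> extremal K p"
proof -
  let ?C = "rel_interior (convex hull V)"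
  have "p \<in> rel_interior ?C"
    using assms(1) by (simp add: rel_interior_rel_interior)
  moreover have "affine hull ?C = affine hull V"
    by (simp add: rel_interior_same_affine_hull)
  then have "a \<in> affine hull ?C" "b \<in> affine hull ?C"
    using assms(3,4) by (simp_all add: hull_inc)
  ultimately show ?thesis
    using not_extremal_rel_interior assms(2,5) by blast
qed

lemma not_extremal_in_cell:
  assumes "is_lowdim_cell L S \<or> is_open_cell L S" "\<not> is_point_cell S" "S \<subseteq> K" "p \<in> S"
  shows "\<not> extremal K p"
proof -
  consider "is_hseg_cell L S" | "is_vseg_cell L S" | "is_htri_cell L S" | "is_vrect_cell L S"
    | "is_open_cell L S"
    using assms(1,2) unfolding is_lowdim_cell_def by blast
  then show ?thesis
  proof cases
    case 1
    then show ?thesis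
      using assms(3,4) unfolding is_hseg_cell_def extremal_def by blast
  next
    case 2
    then show ?thesis
      using assms(3,4) unfolding is_vseg_cell_def extremal_def by blast
  next
    case 3
    then obtain a b c where abc: "\<not> collinear {a, b, c}" "a$3 = b$3"
      "S = rel_interior (convex hull {a, b, c})"
      unfolding is_htri_cell_def by blast
    then have "a \<noteq> b"
      using collinear_2 by (metis insert_absorb2)
    then have "hv_direction (b - a)"
      using abc(2) by (simp add: hv_direction_def)
    then show ?thesis
      using not_extremal_rel_interior_convex_hull assms(3,4) abc(3) by blast
  next
    case 4
    then obtain a b t where "a \<noteq> b" "a$3 = b$3"
      "S = rel_interior (convex hull {a, b, a + t *\<^sub>R ez, b + t *\<^sub>R ez})"
      unfolding is_vrect_cell_def by blast
    moreover have "hv_direction (b - a)"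
      using \<open>a \<noteq> b\<close> \<open>a$3 = b$3\<close> by (simp add: hv_direction_def)
    ultimately show ?thesis
      using not_extremal_rel_interior_convex_hull assms(3,4) by blast
  next
    case 5
    then have "open S"
      by (simp add: is_open_cell_def)
    then have "rel_interior S = S" "affine hull S = UNIV"
      using assms(4) rel_interior_open affine_hull_open by blast+
    moreover have "hv_direction (ez - 0)"
      by (simp add: hv_direction_def ez_def) (simp add: axis_def)
    ultimately show ?thesis
      using not_extremal_rel_interior[of p S K 0 ez] assms(3,4) by simp
  qed
qed

theorem lemma2p3:
  fixes K :: "(real^3) set"
  assumes "complex21 K"
  shows "finite (Extr K)"
proof -
  obtain L where "finite L" "K = \<Union>L"
    and cells: "\<And>S. S \<in> L \<Longrightarrow> is_lowdim_cell L S \<or> is_open_cell L S"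
    using assms unfolding complex21_def by blast
  have "Extr K \<subseteq> \<Union>{S \<in> L. is_point_cell S}"
  proof
    fix p
    assume "p \<in> Extr K"
    then obtain S where "S \<in> L" "p \<in> S" "extremal K p"
      using \<open>K = \<Union>L\<close> by (auto simp: Extr_def extremal_def)
    then show "p \<in> \<Union>{S \<in> L. is_point_cell S}"
      using not_extremal_in_cell[OF cells] \<open>K = \<Union>L\<close> by blast
  qed
  moreover have "finite (\<Union>{S \<in> L. is_point_cell S})"
    using \<open>finite L\<close> by (auto simp: is_point_cell_def)
  ultimately show ?thesis
    using finite_subset by blast
qed

end
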